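(* Consider the search algorithm AMRA* described in the context, run on a multi-resolution planning problem with $N$ resolutions. During each iteration of its outer (anytime) loop, i.e. during each call of ImprovePath, every state is expanded at most $N+1$ times.
   Context: Planning problem: a state space $\mathcal{X}$, a start state $x_s\in\mathcal{X}$, a goal set $\mathcal{G}\subset\mathcal{X}$, and an edge cost function $c:\mathcal{X}\times\mathcal{X}\to\mathbb{R}_{\ge 0}$; the cost of a path is the sum of its edge costs. There are $N$ resolutions $r=1,\dots,N$ ($r=1$ finest); resolution $r$ has a vertex set $V_r\subset\mathcal{X}$ and an action space $\mathcal{A}_r$ whose actions connect states of $V_r$ (edge set $E_r$). The anchor resolution $r=0$ uses the union action space $\mathcal{A}_0=\bigcup_{r\ge1}\mathcal{A}_r$, with $V_0=\bigcup_{r\ge1}V_r$ (taken equal to $V_1$) and edge set $E_0$; $G_0=(V_0,E_0)$. For a state $x$, $\mathrm{Resolutions}(x)=\{r\ge1: x\in V_r\}$; $\mathrm{Succs}(x,\mathcal{A}_r)$ denotes the valid successors of $x$ via actions of $\mathcal{A}_r$ (for $r=0$: all valid successors at all resolutions in $\mathrm{Resolutions}(x)$). Heuristics $h_0,\dots,h_M\ge0$ are given; $h_0$ (anchor) is consistent: $h_0(x_i)\le h_0(x_j)+c(x_i,x_j)$ for every edge; each $h_i$, $i\ge1$, is assigned a resolution $\mathrm{Res}(i)\in\{1,\dots,N\}$, every resolution receiving at least one heuristic (so $M\ge N$), and $\mathrm{Res}(0)=0$. Parameters $w_1,w_2\ge1$. AMRA*: Keep $g$-values (initially $\infty$, $g(x_s)=0$),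 back-pointers $bp$, priority queues $OPEN_0,\dots,OPEN_M$ (initially empty), sets $CLOSED_0,\dots,CLOSED_N$, and a set $INCONS$ (initially $\{x_s\}$). $\mathrm{Key}(x,i)=g(x)+w_1h_i(x)$. Outer loop (while $w_1\ge1$ and $w_2\ge1$): insert/update every $x\in INCONS$ in $OPEN_0$ with key $\mathrm{Key}(x,0)$ and clear $INCONS$; for every $x\in OPEN_0$ and every $j\in\{1,\dots,M\}$ with $\mathrm{Res}(j)\in\mathrm{Resolutions}(x)$, insert/update $x$ in $OPEN_j$ with key $\mathrm{Key}(x,j)$; clear all $CLOSED_r$; call ImprovePath and, if it returns true, publish the path obtained by following $bp$ from $x_{goal}$ to $x_s$; stop if $w_1=w_2=1$, else decrease $w_1,w_2$. ImprovePath: repeat until the open queues are exhausted: choose an inadmissible queue $i\in\{1,\dots,M\}$ (round robin); if $\min OPEN_i\le w_2\cdot\min OPEN_0$, pop the minimum $x$ of $OPEN_i$, run Expand$(x,i)$, insert $x$ into $CLOSED_{\mathrm{Res}(i)}$, and if $x\in\mathcal{G}$ set $x_{goal}=x$ and return true; otherwise pop the minimum $x$ of $OPEN_0$, run Expand$(x,0)$, insert $x$ into $CLOSED_0$, and if $x\in\mathcal{G}$ set $x_{goal}=x$ and return true. If the queues are exhausted, return false (failure). Expand$(x,i)$: let $r=\mathrm{Res}(i)$. If $i\ne0$, remove $x$ from every $OPEN_j$ with $j>0$, $j\ne i$, $\mathrm{Res}(j)=r$. For each $x'\in\mathrm{Succs}(x,\mathcal{A}_r)$ with $g(x')>g(x)+c(x,x')$: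 set $g(x')=g(x)+c(x,x')$, $bp(x')=x$; if $x'\in CLOSED_0$ insert $x'$ into $INCONS$; otherwise insert/update $x'$ in $OPEN_0$ with key $\mathrm{Key}(x',0)$, and for each $j\in\{1,\dots,M\}$ with $l=\mathrm{Res}(j)\in\mathrm{Resolutions}(x')$, $x'\notin CLOSED_l$ and $\mathrm{Key}(x',j)\le w_2\,\mathrm{Key}(x',0)$, insert/update $x'$ in $OPEN_j$ with key $\mathrm{Key}(x',j)$. *)

theory Defs
  imports Main "HOL-Library.Extended_Real"
begin

text \<open>States have type 'x. Resolutions are 1..N; the anchor resolution is 0.
  pSucc r x is Succs(x, A_r) for r >= 1; pRes i = Res(i); pH j = h_j.\<close>

record 'x prob =
  pN :: nat
  pM :: nat
  pV :: "nat \<Rightarrow> 'x set"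
  pSucc :: "nat \<Rightarrow> 'x \<Rightarrow> 'x set"
  pC :: "'x \<Rightarrow> 'x \<Rightarrow> real"
  pH :: "nat \<Rightarrow> 'x \<Rightarrow> real"
  pRes :: "nat \<Rightarrow> nat"
  pGoal :: "'x set"
  pStart :: 'x

definition resolutions :: "'x prob \<Rightarrow> 'x \<Rightarrow> nat set" where
  "resolutions P x = {r. 1 \<le> r \<and> r \<le> pN P \<and> x \<in> pV P r}"

definition succs :: "'x prob \<Rightarrow> nat \<Rightarrow> 'x \<Rightarrow> 'x set" where
  "succs P r x = (if r = 0 then (\<Union>q\<in>resolutions P x. pSucc P q x) else pSucc P r x)"

definition amra_problem :: "'x prob \<Rightarrow> bool" where
  "amra_problem P \<longleftrightarrow>
     1 \<le> pN P \<and> pN P \<le> pM P \<and>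
     (\<forall>r. 1 \<le> r \<and> r \<le> pN P \<longrightarrow> pV P r \<subseteq> pV P 1) \<and>
     (\<forall>r x. 1 \<le> r \<and> r \<le> pN P \<and> x \<in> pV P r \<longrightarrow> pSucc P r x \<subseteq> pV P r) \<and>
     (\<forall>x y. 0 \<le> pC P x y) \<and>
     (\<forall>j x. j \<le> pM P \<longrightarrow> 0 \<le> pH P j x) \<and>
     (\<forall>r x y. 1 \<le> r \<and> r \<le> pN P \<and> x \<in> pV P r \<and> y \<in> pSucc P r x
        \<longrightarrow> pH P 0 x \<le> pH P 0 y + pC P x y) \<and>
     pRes P 0 = 0 \<and>
     (\<forall>i. 1 \<le> i \<and> i \<le> pM P \<longrightarrow> 1 \<le> pRes P i \<and> pRes P i \<le> pN P) \<and>
     (\<forall>r. 1 \<le> r \<and> r \<le> pN P \<longrightarrow> (\<exists>i. 1 \<le> i \<and> i \<le> pM P \<and> pRes P i = r))"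

text \<open>A priority queue is a partial map from states to keys (insert/update = set key).
  cRR is the round-robin pointer (next inadmissible queue in 1..M), cW1/cW2 the weights,
  cFin records that ImprovePath has returned true.\<close>

record 'x cfg =
  cG :: "'x \<Rightarrow> ereal"
  cBp :: "'x \<Rightarrow> 'x option"
  cOpen :: "nat \<Rightarrow> 'x \<Rightarrow> ereal option"
  cClosed :: "nat \<Rightarrow> 'x set"
  cIncons :: "'x set"
  cRR :: nat
  cW1 :: real
  cW2 :: real
  cXgoal :: "'x option"
  cFin :: bool

definition key :: "'x prob \<Rightarrow> 'x cfg \<Rightarrow> 'x \<Rightarrow> nat \<Rightarrow> ereal" where
  "key P C x j = cG C x + ereal (cW1 C * pH P j x)"

text \<open>Minimum key of a queue; infinity for an empty queue.\<close>
definition qmin :: "('x \<Rightarrow> ereal option) \<Rightarrow> ereal" where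
  "qmin q = Inf {k. \<exists>x. q x = Some k}"

definition is_qmin :: "('x \<Rightarrow> ereal option) \<Rightarrow> 'x \<Rightarrow> bool" where
  "is_qmin q x \<longleftrightarrow> (\<exists>k. q x = Some k \<and> (\<forall>y k'. q y = Some k' \<longrightarrow> k \<le> k'))"

definition expand :: "'x prob \<Rightarrow> 'x \<Rightarrow> nat \<Rightarrow> 'x cfg \<Rightarrow> 'x cfg" where
  "expand P x i C = (let r = pRes P i;
     q1 = (\<lambda>j y. if i \<noteq> 0 \<and> 0 < j \<and> j \<le> pM P \<and> j \<noteq> i \<and> pRes P j = r \<and> y = x
                 then None else cOpen C j y);
     imp = (\<lambda>y. y \<in> succs P r x \<and> cG C x + ereal (pC P x y) < cG C y);
     C1 = C\<lparr>cG := (\<lambda>y. if imp y then cG C x + ereal (pC P x y) else cG C y)\<rparr>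
   in C1\<lparr>cBp := (\<lambda>y. if imp y then Some x else cBp C y),
         cIncons := cIncons C \<union> {y. imp y \<and> y \<in> cClosed C 0},
         cOpen := (\<lambda>j y.
            if imp y \<and> y \<notin> cClosed C 0 then
              (if j = 0 then Some (key P C1 y 0)
               else if 1 \<le> j \<and> j \<le> pM P \<and> pRes P j \<in> resolutions P y
                       \<and> y \<notin> cClosed C (pRes P j)
                       \<and> key P C1 y j \<le> ereal (cW2 C) * key P C1 y 0
                    then Some (key P C1 y j) else q1 j y)
            else q1 j y)\<rparr>)"

definition next_rr :: "'x prob \<Rightarrow> nat \<Rightarrow> nat" where
  "next_rr P k = (if k < pM P then k + 1 else 1)"

definition pop_expand :: "'x prob \<Rightarrow> 'x \<Rightarrow> nat \<Rightarrow> 'x cfg \<Rightarrow> 'x cfg" where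
  "pop_expand P x i C = (let
     C0 = C\<lparr>cRR := next_rr P (cRR C), cOpen := (cOpen C)(i := (cOpen C i)(x := None))\<rparr>;
     C1 = expand P x i C0;
     C2 = C1\<lparr>cClosed := (cClosed C1)(pRes P i := insert x (cClosed C1 (pRes P i)))\<rparr>
   in if x \<in> pGoal P then C2\<lparr>cXgoal := Some x, cFin := True\<rparr> else C2)"

definition queues_nonempty :: "'x prob \<Rightarrow> 'x cfg \<Rightarrow> bool" where
  "queues_nonempty P C \<longleftrightarrow> (\<exists>j y. j \<le> pM P \<and> cOpen C j y \<noteq> None)"

text \<open>One iteration of the ImprovePath loop. Label Some (x,i) = Expand(x,i) performed.\<close>
inductive ip_step :: "'x prob \<Rightarrow> 'x cfg \<Rightarrow> ('x \<times> nat) option \<Rightarrow> 'x cfg \<Rightarrow> bool" for P where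
  skip: "\<not> cFin C \<Longrightarrow> queues_nonempty P C \<Longrightarrow>
         qmin (cOpen C (cRR C)) \<le> ereal (cW2 C) * qmin (cOpen C 0) \<Longrightarrow>
         (\<forall>y. cOpen C (cRR C) y = None) \<Longrightarrow>
         ip_step P C None (C\<lparr>cRR := next_rr P (cRR C)\<rparr>)"
| inadm: "\<not> cFin C \<Longrightarrow> queues_nonempty P C \<Longrightarrow>
         qmin (cOpen C (cRR C)) \<le> ereal (cW2 C) * qmin (cOpen C 0) \<Longrightarrow>
         is_qmin (cOpen C (cRR C)) x \<Longrightarrow>
         ip_step P C (Some (x, cRR C)) (pop_expand P x (cRR C) C)"
| anchor: "\<not> cFin C \<Longrightarrow> queues_nonempty P C \<Longrightarrow>
         \<not> qmin (cOpen C (cRR C)) \<le> ereal (cW2 C) * qmin (cOpen C 0) \<Longrightarrow>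
         is_qmin (cOpen C 0) x \<Longrightarrow>
         ip_step P C (Some (x, 0)) (pop_expand P x 0 C)"

inductive ip_run :: "'x prob \<Rightarrow> 'x cfg \<Rightarrow> ('x \<times> nat) option list \<Rightarrow> 'x cfg \<Rightarrow> bool" for P where
  nil: "ip_run P C [] C"
| cons: "ip_step P C l C' \<Longrightarrow> ip_run P C' ls C'' \<Longrightarrow> ip_run P C (l # ls) C''"

text \<open>Preparation at the start of an outer iteration (before calling ImprovePath).\<close>
definition prep :: "'x prob \<Rightarrow> 'x cfg \<Rightarrow> 'x cfg" where
  "prep P C = (let
     o0 = (\<lambda>y. if y \<in> cIncons C then Some (key P C y 0) else cOpen C 0 y)
   in C\<lparr>cOpen := (\<lambda>j y. if j = 0 then o0 y
                        else if 1 \<le> j \<and> j \<le> pM P \<and> o0 y \<noteq> None \<and> pRes P j \<in> resolutions P y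
                        then Some (key P C y j) else cOpen C j y),
        cIncons := {}, cClosed := (\<lambda>_. {}), cFin := False\<rparr>)"

definition init_cfg :: "'x prob \<Rightarrow> real \<Rightarrow> real \<Rightarrow> nat \<Rightarrow> 'x cfg" where
  "init_cfg P w1 w2 r0 = \<lparr>cG = (\<lambda>_. \<infinity>)(pStart P := 0), cBp = (\<lambda>_. None),
      cOpen = (\<lambda>_ _. None), cClosed = (\<lambda>_. {}), cIncons = {pStart P}, cRR = r0,
      cW1 = w1, cW2 = w2, cXgoal = None, cFin = False\<rparr>"

text \<open>Configurations at which ImprovePath is called during a run of AMRA*.
  The weight-decrease rule is unspecified in the paper: any decrease staying >= 1.\<close>
inductive amra_entry :: "'x prob \<Rightarrow> 'x cfg \<Rightarrow> bool" for P where
  first: "1 \<le> w1 \<Longrightarrow> 1 \<le> w2 \<Longrightarrow> 1 \<le> r0 \<Longrightarrow> r0 \<le> pM P \<Longrightarrow>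
          amra_entry P (prep P (init_cfg P w1 w2 r0))"
| later: "amra_entry P C \<Longrightarrow> ip_run P C ls C' \<Longrightarrow>
          (cFin C' \<or> \<not> queues_nonempty P C') \<Longrightarrow>
          \<not> (cW1 C' = 1 \<and> cW2 C' = 1) \<Longrightarrow>
          1 \<le> w1' \<Longrightarrow> w1' \<le> cW1 C' \<Longrightarrow> 1 \<le> w2' \<Longrightarrow> w2' \<le> cW2 C' \<Longrightarrow>
          (w1', w2') \<noteq> (cW1 C', cW2 C') \<Longrightarrow>
          amra_entry P (prep P (C'\<lparr>cW1 := w1', cW2 := w2'\<rparr>))"

definition expansions_of :: "'x \<Rightarrow> ('x \<times> nat) option list \<Rightarrow> nat" where
  "expansions_of x ls = length (filter (\<lambda>l. \<exists>i. l = Some (x, i)) ls)"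

end

theory Submission
  imports Defs
begin

text \<open>A state is only expanded from a queue OPEN_i that contains it, and it is then
  closed at resolution Res(i) in {0..N}. Two invariants of ImprovePath do the rest: the
  closed sets only grow, and a state in CLOSED_Res(j) is never in OPEN_j (expanding x
  removes it from every queue of its resolution, x cannot improve its own g-value since edge
  costs are nonnegative, and Expand never inserts a state into a queue where it is closed). Hence the resolutions of the successive expansions of a state are pairwise
  distinct, so there are at most N + 1 of them.\<close>

lemma res_le_pN:
  assumes "amra_problem P" "i \<le> pM P"
  shows "pRes P i \<le> pN P"
  using assms unfolding amra_problem_def by (cases "i = 0") auto

lemma next_rr_le_pM: "1 \<le> pM P \<Longrightarrow> next_rr P k \<le> pM P"
  by (simp add: next_rr_def)

lemma ereal_add_nonneg_not_less: "0 \<le> c \<Longrightarrow> \<not> a + ereal c < (a::ereal)"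
  by (cases a) auto

definition closed_not_open :: "'x prob \<Rightarrow> 'x cfg \<Rightarrow> bool" where
  "closed_not_open P C \<longleftrightarrow>
     (\<forall>j y. j \<le> pM P \<longrightarrow> y \<in> cClosed C (pRes P j) \<longrightarrow> cOpen C j y = None)"

definition ip_invariant :: "'x prob \<Rightarrow> 'x cfg \<Rightarrow> bool" where
  "ip_invariant P C \<longleftrightarrow> cRR C \<le> pM P \<and> closed_not_open P C"

lemma cClosed_expand [simp]: "cClosed (expand P x i C) = cClosed C"
  by (simp add: expand_def Let_def)

lemma cOpen_expand_closed:
  assumes "pRes P 0 = 0" "y \<in> cClosed C (pRes P j)" "cOpen C j y = None"
  shows "cOpen (expand P x i C) j y = None"
  using assms by (cases "j = 0") (auto simp: expand_def Let_def)

lemma cOpen_expand_self: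
  assumes "0 \<le> pC P x x"
  shows "cOpen (expand P x i C) j x =
    (if i \<noteq> 0 \<and> 0 < j \<and> j \<le> pM P \<and> j \<noteq> i \<and> pRes P j = pRes P i then None else cOpen C j x)"
  using ereal_add_nonneg_not_less[OF assms, of "cG C x"] by (simp add: expand_def Let_def)

lemma cClosed_pop_expand:
  "cClosed (pop_expand P x i C) = (cClosed C)(pRes P i := insert x (cClosed C (pRes P i)))"
  by (simp add: pop_expand_def Let_def)

lemma cRR_pop_expand: "cRR (pop_expand P x i C) = next_rr P (cRR C)"
  by (simp add: pop_expand_def expand_def Let_def)

lemma cOpen_pop_expand:
  "cOpen (pop_expand P x i C) =
     cOpen (expand P x i (C\<lparr>cRR := next_rr P (cRR C), cOpen := (cOpen C)(i := (cOpen C i)(x := None))\<rparr>))"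
  by (simp add: pop_expand_def Let_def)

lemma closed_not_open_pop_expand:
  assumes P: "amra_problem P" and inv: "closed_not_open P C" and i: "i \<le> pM P"
  shows "closed_not_open P (pop_expand P x i C)"
  unfolding closed_not_open_def
proof (intro allI impI)
  fix j y
  assume j: "j \<le> pM P" and closed: "y \<in> cClosed (pop_expand P x i C) (pRes P j)"
  have res0: "pRes P 0 = 0" and res_pos: "\<And>k. 1 \<le> k \<Longrightarrow> k \<le> pM P \<Longrightarrow> 1 \<le> pRes P k"
    and self_cost: "0 \<le> pC P x x"
    using P unfolding amra_problem_def by auto
  show "cOpen (pop_expand P x i C) j y = None"
  proof (cases "y = x \<and> pRes P j = pRes P i")
    case True
    moreover have "j \<noteq> i \<Longrightarrow> i \<noteq> 0 \<and> 0 < j"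
      using True res0 res_pos[of i] res_pos[of j] i j by (cases "i = 0"; cases "j = 0") auto
    ultimately show ?thesis
      by (auto simp: cOpen_pop_expand cOpen_expand_self[OF self_cost] j)
  next
    case False
    then have "y \<in> cClosed C (pRes P j)"
      using closed by (auto simp: cClosed_pop_expand split: if_splits)
    moreover have "cOpen C j y = None"
      using inv j calculation unfolding closed_not_open_def by blast
    ultimately show ?thesis
      by (auto simp: cOpen_pop_expand intro!: cOpen_expand_closed[OF res0])
  qed
qed

lemma ip_step_queue_le_pM:
  assumes "ip_invariant P C" "ip_step P C (Some (y, i)) C'"
  shows "i \<le> pM P"
  using assms(2) by cases (use assms(1) in \<open>auto simp: ip_invariant_def\<close>)

lemma ip_step_expands_open:
  assumes "ip_step P C (Some (y, i)) C'"
  shows "cOpen C i y \<noteq> None \<and> C' = pop_expand P y i C"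
  using assms by cases (auto simp: is_qmin_def)

lemma ip_step_invariant:
  assumes P: "amra_problem P" and inv: "ip_invariant P C" and step: "ip_step P C l C'"
  shows "ip_invariant P C'"
proof -
  have "1 \<le> pM P" using P by (simp add: amra_problem_def)
  with step have rr: "cRR C' \<le> pM P"
    by cases (auto simp: cRR_pop_expand next_rr_le_pM)
  have "closed_not_open P C'"
  proof (cases l)
    case None
    from step[unfolded None] show ?thesis
      by cases (use inv in \<open>auto simp: ip_invariant_def closed_not_open_def\<close>)
  next
    case (Some yi)
    then obtain y i where l: "l = Some (y, i)" by force
    show ?thesis
      using closed_not_open_pop_expand[OF P, of C i y] ip_step_expands_open[OF step[unfolded l]]
        ip_step_queue_le_pM[OF inv step[unfolded l]] inv
      by (simp add: ip_invariant_def)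
  qed
  with rr show ?thesis by (simp add: ip_invariant_def)
qed

lemma ip_step_closed_mono: "ip_step P C l C' \<Longrightarrow> cClosed C r \<subseteq> cClosed C' r"
  by (erule ip_step.cases) (auto simp: cClosed_pop_expand)

lemma ip_step_expanded_state:
  assumes inv: "ip_invariant P C" and step: "ip_step P C (Some (y, i)) C'"
  shows "y \<notin> cClosed C (pRes P i)" "y \<in> cClosed C' (pRes P i)"
  using ip_step_expands_open[OF step] ip_step_queue_le_pM[OF inv step] inv
  by (auto simp: ip_invariant_def closed_not_open_def cClosed_pop_expand)

definition expansion_resolutions :: "'x prob \<Rightarrow> 'x \<Rightarrow> ('x \<times> nat) option list \<Rightarrow> nat list" where
  "expansion_resolutions P x ls =
     map (\<lambda>l. pRes P (snd (the l))) (filter (\<lambda>l. \<exists>i. l = Some (x, i)) ls)"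

lemma length_expansion_resolutions: "length (expansion_resolutions P x ls) = expansions_of x ls"
  by (simp add: expansion_resolutions_def expansions_of_def)

lemma ip_run_invariant:
  "ip_run P C ls C' \<Longrightarrow> amra_problem P \<Longrightarrow> ip_invariant P C \<Longrightarrow> ip_invariant P C'"
  by (induction rule: ip_run.induct) (auto intro: ip_step_invariant)

lemma ip_run_expansion_resolutions:
  assumes "ip_run P C ls C'" "amra_problem P" "ip_invariant P C"
  shows "distinct (expansion_resolutions P x ls)
    \<and> (\<forall>r \<in> set (expansion_resolutions P x ls). x \<notin> cClosed C r \<and> r \<le> pN P)"
  using assms
proof (induction rule: ip_run.induct)
  case (nil C)
  then show ?case by (simp add: expansion_resolutions_def)
next
  case (cons C l C1 ls C2)
  have inv1: "ip_invariant P C1" using ip_step_invariant cons by blast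
  have IH: "distinct (expansion_resolutions P x ls)"
    "\<forall>r \<in> set (expansion_resolutions P x ls). x \<notin> cClosed C1 r \<and> r \<le> pN P"
    using cons.IH[OF cons.prems(1) inv1] by blast+
  have mono: "\<And>r. cClosed C r \<subseteq> cClosed C1 r" using ip_step_closed_mono[OF cons.hyps(1)] .
  show ?case
  proof (cases "\<exists>i. l = Some (x, i)")
    case True
    then obtain i where l: "l = Some (x, i)" by blast
    have "x \<in> cClosed C1 (pRes P i)" "x \<notin> cClosed C (pRes P i)" "pRes P i \<le> pN P"
      using ip_step_expanded_state[OF cons.prems(2)] cons.hyps(1)
        res_le_pN[OF cons.prems(1) ip_step_queue_le_pM[OF cons.prems(2)]]
      unfolding l by blast+
    moreover have "expansion_resolutions P x (l # ls) = pRes P i # expansion_resolutions P x ls"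
      using l by (simp add: expansion_resolutions_def)
    ultimately show ?thesis using IH mono by auto
  next
    case False
    then show ?thesis using IH mono by (auto simp: expansion_resolutions_def)
  qed
qed

lemma amra_entry_invariant:
  "amra_entry P C \<Longrightarrow> amra_problem P \<Longrightarrow> ip_invariant P C"
proof (induction rule: amra_entry.induct)
  case (first w1 w2 r0)
  then show ?case
    by (simp add: prep_def init_cfg_def Let_def ip_invariant_def closed_not_open_def)
next
  case (later C ls C' w1' w2')
  then have "ip_invariant P C'" using ip_run_invariant by blast
  then show ?case by (simp add: prep_def Let_def ip_invariant_def closed_not_open_def)
qed

theorem theorem1:
  fixes P :: "'x prob" and C0 C1 :: "'x cfg" and ls :: "('x \<times> nat) option list" and x :: 'x
  assumes "amra_problem P"
    and "amra_entry P C0"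
    and "ip_run P C0 ls C1"
  shows "expansions_of x ls \<le> pN P + 1"
proof -
  let ?rs = "expansion_resolutions P x ls"
  have "distinct ?rs" "set ?rs \<subseteq> {0..pN P}"
    using ip_run_expansion_resolutions[OF assms(3,1) amra_entry_invariant[OF assms(2,1)]]
    by auto
  then have "length ?rs \<le> card {0..pN P}"
    by (metis distinct_card card_mono finite_atLeastAtMost)
  then show ?thesis by (simp add: length_expansion_resolutions)
qed

end
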